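(* Let $n\ge2$, $d\ge1$, $\mathbf K\in\mathbb R^{n\times d}$ with rows $\mathbf k_i$, $\beta>0$, $\tau>0$, and for a positive integer $s$ let $\mathbf T^s\in\mathbb R^{n\times n}$ be given by $\mathbf T^s_{il}=\sum_{p=0}^s\frac{1}{p!}\big(\tfrac{\beta}{\tau^2}\langle\mathbf k_i,\mathbf k_l\rangle\big)^p$. Then, with $(\sigma,\delta)\defeq\big(\frac{s}{\log n},\frac{d}{\log n}\big)$, $$\mathrm{rank}(\mathbf T^s)\le\frac{1}{\sqrt\pi}\,n^{(\sigma+\delta)\,\mathrm{Ent}\left(\frac{\sigma}{\sigma+\delta}\right)},$$ where $\mathrm{Ent}(p)\defeq-p\log p-(1-p)\log(1-p)$.
   Context: $\log$ is the natural logarithm. *)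

theory Defs
  imports "HOL-Analysis.Analysis"
begin

definition Ent :: "real \<Rightarrow> real" where
  "Ent p = - p * ln p - (1 - p) * ln (1 - p)"

definition Tmat :: "nat \<Rightarrow> real \<Rightarrow> real \<Rightarrow> real^'d^'n \<Rightarrow> real^'n^'n" where
  "Tmat s \<beta> \<tau> K = (\<chi> i l. \<Sum>p=0..s. (1 / fact p) * ((\<beta> / \<tau>^2) * ((K $ i) \<bullet> (K $ l))) ^ p)"

end

theory Submission
  imports Defs "HOL-Library.Multiset" "HOL-Library.FuncSet"
begin

text \<open>Expanding \<open>\<langle>k\<^sub>i, k\<^sub>l\<rangle>^p\<close> shows that every column of \<open>T\<^sup>s\<close> is a linear
  combination of the vectors \<open>(m(k\<^sub>i))\<^sub>i\<close>, where \<open>m\<close> ranges over the monomials of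
  degree at most \<open>s\<close> in \<open>d\<close> variables; hence the rank is at most \<open>C(d + s, s)\<close>.
  Comparing the three central terms of the binomial expansion of \<open>(s + d)^(s + d)\<close>
  gives \<open>2 C(d + s, s) s^s d^d \<le> (s + d)^(s + d)\<close>, while the right-hand side of the
  theorem is exactly \<open>(s + d)^(s + d) / (s^s d^d)\<close> times \<open>1 / \<surd>\<pi> \<ge> 1 / 2\<close>.\<close>

text \<open>\<open>None\<close> contributes the factor 1, so the multisets of size \<open>s\<close> over \<open>'d option\<close>
  enumerate the monomials of degree at most \<open>s\<close>.\<close>

definition padded_monomial :: "real^'d \<Rightarrow> 'd option multiset \<Rightarrow> real" where
  "padded_monomial x N = (\<Prod>j\<in>#N. case j of None \<Rightarrow> 1 | Some i \<Rightarrow> x $ i)"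

lemma padded_monomial_tuple:
  "padded_monomial x (image_mset (Some \<circ> g) (mset_set {..<p}) + replicate_mset q None)
     = (\<Prod>t<p. x $ g t)"
  by (simp add: padded_monomial_def image_mset.compositionality o_def prod_unfold_prod_mset)

lemma inner_power_eq_sum_tuples:
  fixes x y :: "real^'d"
  shows "(x \<bullet> y) ^ p = (\<Sum>g\<in>PiE {..<p} (\<lambda>_. UNIV). (\<Prod>t<p. x $ g t) * (\<Prod>t<p. y $ g t))"
proof -
  have "(x \<bullet> y) ^ p = (\<Prod>t<p. \<Sum>j\<in>UNIV. x $ j * y $ j)"
    by (simp add: inner_vec_def)
  also have "\<dots> = (\<Sum>g\<in>PiE {..<p} (\<lambda>_. UNIV). \<Prod>t<p. x $ g t * y $ g t)"
    by (rule prod_sum_PiE) auto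
  finally show ?thesis
    by (simp add: prod.distrib)
qed

lemma inner_power_in_span_padded_monomials:
  fixes K :: "real^'d^'n" and y :: "real^'d"
  assumes "p \<le> s"
  shows "(\<chi> i. (K $ i \<bullet> y) ^ p)
           \<in> span ((\<lambda>N. \<chi> i. padded_monomial (K $ i) N) ` multisets_of_size UNIV s)"
proof -
  define N where "N g = image_mset (Some \<circ> g) (mset_set {..<p}) + replicate_mset (s - p) None"
    for g :: "nat \<Rightarrow> 'd"
  have "(\<chi> i. (K $ i \<bullet> y) ^ p)
          = (\<Sum>g\<in>PiE {..<p} (\<lambda>_. UNIV).
               (\<Prod>t<p. y $ g t) *\<^sub>R (\<chi> i. padded_monomial (K $ i) (N g)))"
    by (simp add: vec_eq_iff inner_power_eq_sum_tuples N_def padded_monomial_tuple mult.commute)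
  also have "\<dots> \<in> span ((\<lambda>N. \<chi> i. padded_monomial (K $ i) N) ` multisets_of_size UNIV s)"
    using assms
    by (intro span_sum span_scale span_base imageI) (auto simp: N_def multisets_of_size_def)
  finally show ?thesis .
qed

lemma rank_inner_product_polynomial_le:
  fixes K :: "real^'d^'n" and L :: "real^'d^'m" and c :: "nat \<Rightarrow> real"
  shows "rank (\<chi> i l. \<Sum>p=0..s. c p * (K $ i \<bullet> L $ l) ^ p) \<le> (CARD('d) + s) choose s"
proof -
  define S where
    "S = (\<lambda>N. \<chi> i. padded_monomial (K $ i) N) ` multisets_of_size (UNIV :: 'd option set) s"
  have M: "finite (multisets_of_size (UNIV :: 'd option set) s)"
    by (simp add: finite_multisets_of_size)
  have "card S \<le> card (multisets_of_size (UNIV :: 'd option set) s)"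
    unfolding S_def using M by (rule card_image_le)
  also have "\<dots> = (CARD('d) + s) choose s"
    by (simp add: card_multisets_of_size)
  finally have S: "finite S" "card S \<le> (CARD('d) + s) choose s"
    using M by (simp_all add: S_def)
  have "columns (\<chi> i l. \<Sum>p=0..s. c p * (K $ i \<bullet> L $ l) ^ p) \<subseteq> span S"
  proof
    fix v assume "v \<in> columns (\<chi> i l. \<Sum>p=0..s. c p * (K $ i \<bullet> L $ l) ^ p)"
    then obtain l where "v = (\<Sum>p=0..s. c p *\<^sub>R (\<chi> i. (K $ i \<bullet> L $ l) ^ p))"
      by (auto simp: columns_def column_def vec_eq_iff)
    then show "v \<in> span S"
      unfolding S_def by (auto intro!: span_sum span_scale inner_power_in_span_padded_monomials)
  qed
  then have "dim (columns (\<chi> i l. \<Sum>p=0..s. c p * (K $ i \<bullet> L $ l) ^ p)) \<le> card S"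
    using S(1) by (rule dim_le_card)
  then show ?thesis
    using S(2) by (simp add: column_rank_def)
qed

lemma binomial_mul_powers_le:
  fixes a b :: nat
  assumes "a \<ge> 1" "b \<ge> 1"
  shows "2 * real ((a + b) choose a) * real a ^ a * real b ^ b \<le> real (a + b) ^ (a + b)"
proof -
  obtain a' b' where a: "a = Suc a'" and b: "b = Suc b'"
    using assms by (metis Suc_le_D One_nat_def)
  define t where "t k = real ((a + b) choose k) * real a ^ k * real b ^ (a + b - k)" for k
  \<comment> \<open>Each neighbour of the central term \<open>t a\<close> is at least \<open>t a / 2\<close>.\<close>
  have left: "real (Suc b) * t a' = real b * t a"
  proof -
    have "Suc b * ((a + b) choose a') = a * ((a + b) choose a)"
      using Suc_times_binomial_add[of a' b] by (simp add: a)
    then have C: "real (Suc b) * real ((a + b) choose a') = real a * real ((a + b) choose a)"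
      by (metis of_nat_mult)
    have "real (Suc b) * t a'
        = (real (Suc b) * real ((a + b) choose a')) * real a ^ a' * real b ^ Suc b"
      by (simp add: t_def a)
    also have "\<dots> = real b * t a"
      unfolding C by (simp add: t_def a)
    finally show ?thesis .
  qed
  have right: "real (Suc a) * t (Suc a) = real a * t a"
  proof -
    have "Suc a * ((a + b) choose Suc a) = b * ((a + b) choose a)"
      using Suc_times_binomial_add[of a b'] by (simp add: b)
    then have C: "real (Suc a) * real ((a + b) choose Suc a) = real b * real ((a + b) choose a)"
      by (metis of_nat_mult)
    have "real (Suc a) * t (Suc a)
        = (real (Suc a) * real ((a + b) choose Suc a)) * real a ^ Suc a * real b ^ b'"
      by (simp add: t_def b)
    also have "\<dots> = real a * t a"
      unfolding C by (simp add: t_def b)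
    finally show ?thesis .
  qed
  have half: "v \<le> 2 * u" if "real (Suc k) * u = real k * v" "k \<ge> 1" "v \<ge> 0" for k u v
  proof -
    have "real (Suc k) * v \<le> real (2 * k) * v"
      using that by (intro mult_right_mono) auto
    also have "\<dots> = real (Suc k) * (2 * u)"
      using that(1) by simp
    finally show ?thesis
      by simp
  qed
  have "t a \<le> 2 * t a'" "t a \<le> 2 * t (Suc a)"
    using half[OF left] half[OF right] assms by (simp_all add: t_def)
  then have "2 * t a \<le> t a' + t a + t (Suc a)"
    by simp
  also have "\<dots> = (\<Sum>k\<in>{a', a, Suc a}. t k)"
    by (simp add: a)
  also have "\<dots> \<le> (\<Sum>k\<le>a + b. t k)"
    using assms by (intro sum_mono2) (auto simp: t_def a)
  also have "\<dots> = real (a + b) ^ (a + b)"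
    by (simp add: t_def binomial_ring atLeast0AtMost)
  finally show ?thesis
    by (simp add: t_def)
qed

lemma Ent_scaled:
  fixes x y :: real
  assumes "x > 0" "y > 0"
  shows "(x + y) * Ent (x / (x + y)) = (x + y) * ln (x + y) - x * ln x - y * ln y"
proof -
  have q: "1 - x / (x + y) = y / (x + y)"
    using assms by (simp add: field_simps)
  have "(x + y) * Ent (x / (x + y))
      = - ((x + y) * (x / (x + y))) * ln (x / (x + y))
        - ((x + y) * (y / (x + y))) * ln (y / (x + y))"
    unfolding Ent_def q by (simp add: algebra_simps)
  also have "\<dots> = - x * ln (x / (x + y)) - y * ln (y / (x + y))"
    using assms by simp
  also have "\<dots> = (x + y) * ln (x + y) - x * ln x - y * ln y"
    using assms by (simp add: ln_div algebra_simps)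
  finally show ?thesis .
qed

lemma powr_Ent_log_scaled:
  fixes n x y :: real
  assumes "n > 1" "x > 0" "y > 0"
  shows "n powr ((x / ln n + y / ln n) * Ent ((x / ln n) / (x / ln n + y / ln n)))
           = (x + y) powr (x + y) / (x powr x * y powr y)"
proof -
  have "ln n > 0"
    using assms(1) by simp
  then have "ln n * ((x / ln n + y / ln n) * Ent ((x / ln n) / (x / ln n + y / ln n)))
               = (x + y) * Ent (x / (x + y))"
    by (simp add: add_divide_distrib[symmetric])
  then show ?thesis
    using assms by (simp add: powr_def Ent_scaled exp_diff exp_add mult.commute)
qed

theorem lemma4:
  fixes K :: "real^'d^'n" and \<beta> \<tau> :: real and s :: nat
  assumes "CARD('n) \<ge> 2"
    and "\<beta> > 0" and "\<tau> > 0" and "s \<ge> 1"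
  shows "let n = real CARD('n); d = real CARD('d);
             \<sigma> = real s / ln n; \<delta> = d / ln n
         in real (rank (Tmat s \<beta> \<tau> K))
              \<le> (1 / sqrt pi) * n powr ((\<sigma> + \<delta>) * Ent (\<sigma> / (\<sigma> + \<delta>)))"
proof -
  define D where "D = CARD('d)"
  have D: "D \<ge> 1"
    by (simp add: D_def Suc_le_eq)
  have T: "Tmat s \<beta> \<tau> K
      = (\<chi> i l. \<Sum>p=0..s. (1 / fact p * (\<beta> / \<tau>^2) ^ p) * (K $ i \<bullet> K $ l) ^ p)"
    by (simp add: Tmat_def power_mult_distrib power_divide)
  have "rank (Tmat s \<beta> \<tau> K) \<le> (D + s) choose s"
    unfolding T D_def by (rule rank_inner_product_polynomial_le)
  then have "real (rank (Tmat s \<beta> \<tau> K)) \<le> real ((s + D) choose s)"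
    by (simp add: add.commute)
  also have "\<dots> \<le> 1 / 2 * (real (s + D) ^ (s + D) / (real s ^ s * real D ^ D))"
    using binomial_mul_powers_le[OF assms(4) D] assms(4) D by (simp add: field_simps)
  also have "\<dots> \<le> 1 / sqrt pi * (real (s + D) ^ (s + D) / (real s ^ s * real D ^ D))"
  proof (rule mult_right_mono)
    have "sqrt pi \<le> sqrt 4"
      using pi_less_4 by (intro real_sqrt_le_mono) simp
    then show "1 / 2 \<le> 1 / sqrt pi"
      by (simp add: divide_simps)
  qed simp
  also have "real (s + D) ^ (s + D) / (real s ^ s * real D ^ D)
      = real CARD('n) powr ((real s / ln CARD('n) + real D / ln CARD('n))
          * Ent ((real s / ln CARD('n)) / (real s / ln CARD('n) + real D / ln CARD('n))))"
    using assms(1,4) D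
    by (subst powr_Ent_log_scaled) (auto simp: powr_realpow simp flip: of_nat_add)
  finally show ?thesis
    by (simp add: Let_def D_def)
qed

end
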